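(* Let $\mathcal M=(M,\le,{}^\perp)$ be a complete orthomodular lattice and $L$ an involutive submonoid of $\mathbf{Lin}(\mathcal M)$ containing all Sasaki projections $\pi_m$ ($m\in M$). Then $\mathscr P(L)=(\mathscr P(L),\bigcup,\odot,{}^*,{\sim},\{\mathrm{id}_M\})$ is an involutive generalized dynamic algebra.
   Context: For an orthomodular lattice and $m\in M$, $\pi_m(x)=m\wedge(m^\perp\vee x)$. A map $f\colon M\to M$ is linear if there is $g\colon M\to M$ (unique, written $f^*$) with $f(x)\le y^\perp\iff x\le g(y)^\perp$ for all $x,y$. $\mathbf{Lin}(\mathcal M)$ is the set of linear maps, an involutive monoid under composition, $f\mapsto f^*$, $\mathrm{id}_M$; $\pi_m\in\mathbf{Lin}(\mathcal M)$ and $\pi_m^*=\pi_m$. $\mathscr P(L)$ is the powerset of $L$ with union as join, $A\odot B=\{a\circ b\mid a\in A,b\in B\}$, $A^*=\{a^*\mid a\in A\}$, ${\sim}A=\{\pi_{(\bigvee_{a\in A}a(1))^\perp}\}$; $(\mathscr P(L),\bigcup,\odot,{}^*,\{\mathrm{id}_M\})$ is an involutive unital quantale. An involutive unital quantale is $(Q,\bigsqcup,\odot,{}^*,e)$ with $Q$ a complete join-semilattice, $\odot$ associative and distributing over arbitrary joins in each argument, $e$ a unit, ${}^*$ with $x^{**}=x$, $(x\odot y)^*=y^*\odot x^*$, $(\bigsqcup x_i)^*=\bigsqcup x_i^*$. An involutive generalized dynamic algebra is such a quantale with ${\sim}\colon K\to K$ such that for all $x,y$ and families $(x_i)$: ${\sim}(x\odot{\sim}{\sim}y)={\sim}(x\odot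 y)$; ${\sim}(\bigsqcup_i{\sim}{\sim}x_i)={\sim}(\bigsqcup_i x_i)$; $({\sim}x)^*={\sim}x$; ${\sim}{\sim}({\sim}{\sim}x\odot y)={\sim}({\sim}x\sqcup{\sim}({\sim}x\sqcup y))$. *)

theory Defs
  imports "HOL-Library.Complemented_Lattices"
begin

text \<open>The complete orthomodular lattice M is modelled as a type of class
  complete_orthomodular_lattice; the orthocomplement x^perp is written - x.\<close>

definition sasaki :: "'a::complete_orthomodular_lattice \<Rightarrow> 'a \<Rightarrow> 'a" where
  "sasaki m x = inf m (sup (- m) x)"

definition adjoint_of :: "('a::complete_orthomodular_lattice \<Rightarrow> 'a) \<Rightarrow> ('a \<Rightarrow> 'a) \<Rightarrow> bool" where
  "adjoint_of f g \<longleftrightarrow> (\<forall>x y. f x \<le> - y \<longleftrightarrow> x \<le> - g y)"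

definition linear_map :: "('a::complete_orthomodular_lattice \<Rightarrow> 'a) \<Rightarrow> bool" where
  "linear_map f \<longleftrightarrow> (\<exists>g. adjoint_of f g)"

definition adj :: "('a::complete_orthomodular_lattice \<Rightarrow> 'a) \<Rightarrow> ('a \<Rightarrow> 'a)" where
  "adj f = (THE g. adjoint_of f g)"

definition Lin :: "('a::complete_orthomodular_lattice \<Rightarrow> 'a) set" where
  "Lin = {f. linear_map f}"

definition inv_submonoid :: "('a::complete_orthomodular_lattice \<Rightarrow> 'a) set \<Rightarrow> bool" where
  "inv_submonoid L \<longleftrightarrow> L \<subseteq> Lin \<and> id \<in> L \<and> (\<forall>f\<in>L. \<forall>g\<in>L. f \<circ> g \<in> L) \<and> (\<forall>f\<in>L. adj f \<in> L)"

definition pmult :: "('a \<Rightarrow> 'a) set \<Rightarrow> ('a \<Rightarrow> 'a) set \<Rightarrow> ('a \<Rightarrow> 'a) set" where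
  "pmult A B = {a \<circ> b | a b. a \<in> A \<and> b \<in> B}"

definition pstar :: "('a::complete_orthomodular_lattice \<Rightarrow> 'a) set \<Rightarrow> ('a \<Rightarrow> 'a) set" where
  "pstar A = adj ` A"

definition ptilde :: "('a::complete_orthomodular_lattice \<Rightarrow> 'a) set \<Rightarrow> ('a \<Rightarrow> 'a) set" where
  "ptilde A = {sasaki (- (SUP a\<in>A. a top))}"

definition inv_unital_quantale ::
  "'q set \<Rightarrow> ('q \<Rightarrow> 'q \<Rightarrow> bool) \<Rightarrow> ('q set \<Rightarrow> 'q) \<Rightarrow> ('q \<Rightarrow> 'q \<Rightarrow> 'q) \<Rightarrow> ('q \<Rightarrow> 'q) \<Rightarrow> 'q \<Rightarrow> bool" where
  "inv_unital_quantale Q le J mult st e \<longleftrightarrow>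
     (\<forall>x\<in>Q. le x x) \<and>
     (\<forall>x\<in>Q. \<forall>y\<in>Q. le x y \<and> le y x \<longrightarrow> x = y) \<and>
     (\<forall>x\<in>Q. \<forall>y\<in>Q. \<forall>z\<in>Q. le x y \<and> le y z \<longrightarrow> le x z) \<and>
     (\<forall>S\<subseteq>Q. J S \<in> Q \<and> (\<forall>x\<in>S. le x (J S)) \<and> (\<forall>u\<in>Q. (\<forall>x\<in>S. le x u) \<longrightarrow> le (J S) u)) \<and>
     (\<forall>x\<in>Q. \<forall>y\<in>Q. mult x y \<in> Q) \<and>
     (\<forall>x\<in>Q. \<forall>y\<in>Q. \<forall>z\<in>Q. mult (mult x y) z = mult x (mult y z)) \<and>
     (\<forall>x\<in>Q. \<forall>S\<subseteq>Q. mult x (J S) = J ((\<lambda>y. mult x y) ` S)) \<and>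
     (\<forall>x\<in>Q. \<forall>S\<subseteq>Q. mult (J S) x = J ((\<lambda>y. mult y x) ` S)) \<and>
     e \<in> Q \<and> (\<forall>x\<in>Q. mult e x = x \<and> mult x e = x) \<and>
     (\<forall>x\<in>Q. st x \<in> Q) \<and>
     (\<forall>x\<in>Q. st (st x) = x) \<and>
     (\<forall>x\<in>Q. \<forall>y\<in>Q. st (mult x y) = mult (st y) (st x)) \<and>
     (\<forall>S\<subseteq>Q. st (J S) = J (st ` S))"

definition inv_gen_dyn_alg ::
  "'q set \<Rightarrow> ('q \<Rightarrow> 'q \<Rightarrow> bool) \<Rightarrow> ('q set \<Rightarrow> 'q) \<Rightarrow> ('q \<Rightarrow> 'q \<Rightarrow> 'q) \<Rightarrow> ('q \<Rightarrow> 'q) \<Rightarrow> ('q \<Rightarrow> 'q) \<Rightarrow> 'q \<Rightarrow> bool" where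
  "inv_gen_dyn_alg Q le J mult st neg e \<longleftrightarrow>
     inv_unital_quantale Q le J mult st e \<and>
     (\<forall>x\<in>Q. neg x \<in> Q) \<and>
     (\<forall>x\<in>Q. \<forall>y\<in>Q. neg (mult x (neg (neg y))) = neg (mult x y)) \<and>
     (\<forall>S\<subseteq>Q. neg (J (neg ` neg ` S)) = neg (J S)) \<and>
     (\<forall>x\<in>Q. st (neg x) = neg x) \<and>
     (\<forall>x\<in>Q. \<forall>y\<in>Q. neg (neg (mult (neg (neg x)) y)) = neg (J {neg x, neg (J {neg x, y})}))"

end

theory Submission
  imports Defs
begin

(* A linear map f is residuated (f x <= y^\<perp> iff x <= (f* y)^\<perp>), hence preserves arbitrary
   joins, and f \<mapsto> f* is an involutive anti-automorphism of Lin; this makes P(L) an involutive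
   unital quantale. The negation only sees the support supp A = \<Squnion>{a 1 | a \<in> A}: ~A is the
   singleton {\<pi>_(supp A)^\<perp>}, supp (~A) = (supp A)^\<perp> because \<pi>_m 1 = m, and
   supp (A \<odot> B) = \<Squnion>{a (supp B) | a \<in> A} by join preservation. Each dynamic-algebra axiom
   thereby reduces to an identity in M; the last one is \<pi>_m n = m \<sqinter> (m^\<perp> \<squnion> n) read through
   De Morgan. Orthomodularity is used only to show that Sasaki projections are self-adjoint. *)

unbundle lattice_syntax

lemma adjoint_of_sym:
  fixes f g :: "'a::complete_orthomodular_lattice \<Rightarrow> 'a"
  assumes "adjoint_of f g" shows "adjoint_of g f"
  using assms unfolding adjoint_of_def by (metis compl_le_swap1 compl_le_swap2 ortho_involution)

lemma adjoint_of_unique: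
  fixes f g h :: "'a::complete_orthomodular_lattice \<Rightarrow> 'a"
  assumes "adjoint_of f g" "adjoint_of f h" shows "g = h"
proof
  fix y
  have "- g y \<le> - h y" "- h y \<le> - g y" using assms unfolding adjoint_of_def by blast+
  then show "g y = h y" by (simp add: antisym)
qed

lemma adj_eqI:
  fixes f g :: "'a::complete_orthomodular_lattice \<Rightarrow> 'a"
  assumes "adjoint_of f g" shows "adj f = g"
  unfolding adj_def using assms adjoint_of_unique by blast

lemma adjoint_of_adj:
  fixes f :: "'a::complete_orthomodular_lattice \<Rightarrow> 'a"
  assumes "f \<in> Lin" shows "adjoint_of f (adj f)"
  using assms adj_eqI unfolding Lin_def linear_map_def by blast

lemma adjoint_of_comp:
  fixes f f' g g' :: "'a::complete_orthomodular_lattice \<Rightarrow> 'a"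
  assumes "adjoint_of f f'" "adjoint_of g g'" shows "adjoint_of (f \<circ> g) (g' \<circ> f')"
  using assms unfolding adjoint_of_def by simp

lemma adj_adj:
  fixes f :: "'a::complete_orthomodular_lattice \<Rightarrow> 'a"
  assumes "f \<in> Lin" shows "adj (adj f) = f"
  by (rule adj_eqI[OF adjoint_of_sym[OF adjoint_of_adj[OF assms]]])

lemma adj_comp:
  fixes f g :: "'a::complete_orthomodular_lattice \<Rightarrow> 'a"
  assumes "f \<in> Lin" "g \<in> Lin" shows "adj (f \<circ> g) = adj g \<circ> adj f"
  by (intro adj_eqI adjoint_of_comp adjoint_of_adj assms)

lemma adjoint_of_mono:
  fixes f g :: "'a::complete_orthomodular_lattice \<Rightarrow> 'a"
  assumes "adjoint_of f g" "x \<le> y" shows "f x \<le> f y"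
proof -
  have "f y \<le> - (- f y)" by simp
  then have "y \<le> - g (- f y)" using assms(1) unfolding adjoint_of_def by blast
  then have "x \<le> - g (- f y)" using assms(2) by simp
  then have "f x \<le> - (- f y)" using assms(1) unfolding adjoint_of_def by blast
  then show ?thesis by simp
qed

lemma adjoint_of_Sup:
  fixes f g :: "'a::complete_orthomodular_lattice \<Rightarrow> 'a"
  assumes "adjoint_of f g" shows "f (\<Squnion> S) = (\<Squnion>s\<in>S. f s)"
proof (rule antisym)
  show "(\<Squnion>s\<in>S. f s) \<le> f (\<Squnion> S)"
    by (intro SUP_least adjoint_of_mono[OF assms] Sup_upper)
  have "\<Squnion> S \<le> - g (- (\<Squnion>s\<in>S. f s))"
  proof (rule Sup_least)
    fix s assume "s \<in> S"
    then have "f s \<le> - (- (\<Squnion>s\<in>S. f s))" by (simp add: SUP_upper)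
    then show "s \<le> - g (- (\<Squnion>s\<in>S. f s))" using assms unfolding adjoint_of_def by blast
  qed
  then have "f (\<Squnion> S) \<le> - (- (\<Squnion>s\<in>S. f s))" using assms unfolding adjoint_of_def by blast
  then show "f (\<Squnion> S) \<le> (\<Squnion>s\<in>S. f s)" by simp
qed

lemma sasaki_le_compl_swap:
  fixes m x y :: "'a::complete_orthomodular_lattice"
  assumes "sasaki m x \<le> - y" shows "x \<le> - sasaki m y"
proof -
  have "x \<le> - m \<squnion> (m \<sqinter> (- m \<squnion> x))"
    using orthomodular[of "- m" "- m \<squnion> x"] by simp
  also have "\<dots> \<le> - m \<squnion> (m \<sqinter> - y)"
    using assms unfolding sasaki_def by (simp add: le_supI2)
  finally show ?thesis unfolding sasaki_def by simp
qed

lemma sasaki_adjoint_of_sasaki: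
  "adjoint_of (sasaki m) (sasaki (m::'a::complete_orthomodular_lattice))"
  unfolding adjoint_of_def by (metis sasaki_le_compl_swap compl_le_swap1)

lemma sasaki_Lin: "sasaki (m::'a::complete_orthomodular_lattice) \<in> Lin"
  using sasaki_adjoint_of_sasaki unfolding Lin_def linear_map_def by blast

lemma adj_sasaki: "adj (sasaki m) = sasaki (m::'a::complete_orthomodular_lattice)"
  by (rule adj_eqI[OF sasaki_adjoint_of_sasaki])

lemma sasaki_top: "sasaki m \<top> = (m::'a::complete_orthomodular_lattice)"
  unfolding sasaki_def by simp

lemma pmult_assoc: "pmult (pmult A B) C = pmult A (pmult B C)"
  unfolding pmult_def by (auto simp: comp_assoc) (metis comp_assoc)+

lemma pmult_Union_right: "pmult A (\<Union> S) = (\<Union>B\<in>S. pmult A B)"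
  unfolding pmult_def by blast

lemma pmult_Union_left: "pmult (\<Union> S) B = (\<Union>A\<in>S. pmult A B)"
  unfolding pmult_def by blast

lemma pmult_id_left: "pmult {id} A = A"
  unfolding pmult_def by auto

lemma pmult_id_right: "pmult A {id} = A"
  unfolding pmult_def by auto

lemma pstar_pstar:
  assumes "A \<subseteq> Lin" shows "pstar (pstar A) = A"
  using assms unfolding pstar_def by (simp add: image_image subset_iff adj_adj cong: image_cong)

lemma pstar_pmult:
  assumes "A \<subseteq> Lin" "B \<subseteq> Lin" shows "pstar (pmult A B) = pmult (pstar B) (pstar A)"
proof -
  have "pstar (pmult A B) = {adj (a \<circ> b) | a b. a \<in> A \<and> b \<in> B}"
    unfolding pstar_def pmult_def by blast
  also have "\<dots> = {adj b \<circ> adj a | a b. a \<in> A \<and> b \<in> B}"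
    using assms by (metis (no_types, opaque_lifting) adj_comp subsetD)
  also have "\<dots> = pmult (pstar B) (pstar A)"
    unfolding pstar_def pmult_def by blast
  finally show ?thesis .
qed

lemma pstar_Union: "pstar (\<Union> S) = (\<Union>A\<in>S. pstar A)"
  unfolding pstar_def by (rule image_Union)

lemma inv_unital_quantale_Pow:
  assumes "inv_submonoid L"
  shows "inv_unital_quantale (Pow L) (\<subseteq>) Union pmult pstar {id}"
proof -
  have "L \<subseteq> Lin" and "id \<in> L"
    and comp_closed: "\<And>f g. f \<in> L \<Longrightarrow> g \<in> L \<Longrightarrow> f \<circ> g \<in> L"
    and adj_closed: "\<And>f. f \<in> L \<Longrightarrow> adj f \<in> L"
    using assms unfolding inv_submonoid_def by blast+
  then have Lin: "A \<subseteq> L \<Longrightarrow> A \<subseteq> Lin" for A by blast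
  have "pmult A B \<subseteq> L" if "A \<subseteq> L" "B \<subseteq> L" for A B
    using that comp_closed unfolding pmult_def by blast
  moreover have "pstar A \<subseteq> L" if "A \<subseteq> L" for A
    using that adj_closed unfolding pstar_def by blast
  ultimately show ?thesis
    unfolding inv_unital_quantale_def
    using \<open>id \<in> L\<close> by (auto simp: pmult_assoc pmult_Union_left pmult_Union_right
        pmult_id_left pmult_id_right pstar_pstar[OF Lin] pstar_pmult[OF Lin Lin] pstar_Union)
qed

definition supp :: "('a::complete_orthomodular_lattice \<Rightarrow> 'a) set \<Rightarrow> 'a" where
  "supp A = (\<Squnion>a\<in>A. a \<top>)"

lemma ptilde_eq: "ptilde A = {sasaki (- supp A)}"
  unfolding ptilde_def supp_def by simp

lemma supp_sasaki: "supp {sasaki m} = m"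
  unfolding supp_def by (simp add: sasaki_top)

lemma supp_ptilde: "supp (ptilde A) = - supp A"
  by (simp add: ptilde_eq supp_sasaki)

lemma supp_Union: "supp (\<Union> S) = (\<Squnion>A\<in>S. supp A)"
  unfolding supp_def by (rule antisym) (auto intro!: SUP_least SUP_upper2)

lemma supp_Un: "supp (A \<union> B) = supp A \<squnion> supp B"
  unfolding supp_def by (simp add: SUP_union)

lemma supp_pmult:
  assumes "A \<subseteq> Lin" shows "supp (pmult A B) = (\<Squnion>a\<in>A. a (supp B))"
proof -
  have "a (supp B) = (\<Squnion>b\<in>B. a (b \<top>))" if "a \<in> A" for a
    using adjoint_of_Sup[OF adjoint_of_adj, of a "(\<lambda>b. b \<top>) ` B"] that assms
    unfolding supp_def by (auto simp: image_image)
  moreover have "supp (pmult A B) = (\<Squnion>a\<in>A. \<Squnion>b\<in>B. a (b \<top>))"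
    unfolding supp_def pmult_def
    by (rule antisym) (auto intro!: SUP_least SUP_upper2 simp: SUP_upper)
  ultimately show ?thesis by simp
qed

lemma supp_pmult_sasaki: "supp (pmult {sasaki m} B) = sasaki m (supp B)"
  using supp_pmult[of "{sasaki m}" B] by (simp add: sasaki_Lin)

lemma ptilde_cong: "supp A = supp B \<Longrightarrow> ptilde A = ptilde B"
  by (simp add: ptilde_eq)

lemma ptilde_ptilde: "ptilde (ptilde A) = {sasaki (supp A)}"
  by (simp add: ptilde_eq supp_sasaki)

lemma ptilde_pmult_ptilde_ptilde:
  assumes "A \<subseteq> Lin" shows "ptilde (pmult A (ptilde (ptilde B))) = ptilde (pmult A B)"
  using assms by (intro ptilde_cong) (simp add: supp_pmult supp_ptilde)

lemma ptilde_Union_ptilde_ptilde: "ptilde (\<Union> (ptilde ` ptilde ` S)) = ptilde (\<Union> S)"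
  by (intro ptilde_cong) (simp add: supp_Union supp_ptilde image_image)

lemma pstar_ptilde: "pstar (ptilde A) = ptilde A"
  by (simp add: ptilde_eq pstar_def adj_sasaki)

lemma ptilde_ptilde_pmult:
  "ptilde (ptilde (pmult (ptilde (ptilde A)) B)) = ptilde (\<Union> {ptilde A, ptilde (\<Union> {ptilde A, B})})"
  by (intro ptilde_cong) (simp add: ptilde_ptilde supp_ptilde supp_pmult_sasaki supp_Un sasaki_def)

theorem lemma3p9:
  fixes L :: "('a::complete_orthomodular_lattice \<Rightarrow> 'a) set"
  assumes "inv_submonoid L"
    and "\<forall>m. sasaki m \<in> L"
  shows "inv_gen_dyn_alg (Pow L) (\<subseteq>) Union pmult pstar ptilde {id}"
proof -
  have "L \<subseteq> Lin" using assms(1) unfolding inv_submonoid_def by blast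
  then have Lin: "A \<in> Pow L \<Longrightarrow> A \<subseteq> Lin" for A by blast
  have "ptilde A \<in> Pow L" for A using assms(2) by (simp add: ptilde_eq)
  then show ?thesis
    unfolding inv_gen_dyn_alg_def
  proof (intro conjI ballI allI impI inv_unital_quantale_Pow[OF assms(1)] pstar_ptilde
      ptilde_Union_ptilde_ptilde ptilde_ptilde_pmult)
    show "ptilde (pmult A (ptilde (ptilde B))) = ptilde (pmult A B)" if "A \<in> Pow L" for A B
      using Lin[OF that] by (rule ptilde_pmult_ptilde_ptilde)
  qed
qed

end
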